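(* Let $n\ge3$ be an even integer and let $x\in\mathcal{D}_n$ have order $m$. Then the degree of $x$ in $OD(\mathcal{D}_n)$ is $$\deg(x)=\begin{cases} m-2\phi(m)+\sum_{\lambda\mid\frac{n}{m}}\phi(\lambda m), & m \text{ odd},\ m>1,\\ \sum_{\lambda\mid\frac{n}{2}}\phi(2\lambda), & m=2,\\ n+m-2\phi(m)+\sum_{\lambda\mid\frac{n}{m}}\phi(\lambda m), & m\text{ even},\ m>2,\\ 2n-1, & m=1,\end{cases}$$ where $\phi$ is Euler's totient function.
   Context: The dihedral group $\mathcal{D}_n$ ($n\ge3$) is the group $\langle a,b\mid a^n=b^2=(ab)^2=e\rangle$ of order $2n$. For a finite group $G$, $o(x)$ denotes the order of $x\in G$. The order-divisor graph $OD(G)$ is the simple undirected graph with vertex set $G$, in which two distinct vertices $x,y$ are adjacent if and only if $o(x)\neq o(y)$ and either $o(x)\mid o(y)$ or $o(y)\mid o(x)$. *)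

theory Defs
  imports "HOL-Algebra.Algebra" "HOL-Number_Theory.Number_Theory"
begin

text \<open>Concrete model of the dihedral group D_n of order 2n: the pair (i, s) stands for
  a^i b^(if s then 1 else 0) with 0 \<le> i < n.  Using b a = a^(-1) b one gets
  (a^i b^s)(a^j b^t) = a^(i + (if s then -j else j)) b^(s+t).\<close>

definition dih_mult :: "nat \<Rightarrow> int \<times> bool \<Rightarrow> int \<times> bool \<Rightarrow> int \<times> bool" where
  "dih_mult n x y = ((fst x + (if snd x then - fst y else fst y)) mod int n, snd x \<noteq> snd y)"

definition dihedral :: "nat \<Rightarrow> (int \<times> bool) monoid" where
  "dihedral n = \<lparr> carrier = {0..<int n} \<times> (UNIV :: bool set),
     monoid.mult = dih_mult n, one = (0, False) \<rparr>"

definition od_adj :: "('a, 'b) monoid_scheme \<Rightarrow> 'a \<Rightarrow> 'a \<Rightarrow> bool" where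
  "od_adj G x y \<longleftrightarrow> x \<noteq> y \<and> group.ord G x \<noteq> group.ord G y \<and>
     (group.ord G x dvd group.ord G y \<or> group.ord G y dvd group.ord G x)"

definition od_degree :: "('a, 'b) monoid_scheme \<Rightarrow> 'a \<Rightarrow> nat" where
  "od_degree G x = card {y \<in> carrier G. od_adj G x y}"

end

theory Submission imports Defs begin

text \<open>In D_n the n reflections have order 2, and the rotation a^k has order
  n / gcd(n, k), so that exactly \<phi>(d) rotations have order d for each d dividing n.  Hence
  deg(x) is the sum of \<phi>(d) over the divisors d of n comparable with m = o(x) and distinct
  from it, plus n if 2 is such a d.  The divisors of m contribute m - \<phi>(m) by Gauss's identity,
  and the multiples of m contribute the sum of \<phi>(\<lambda> m) over \<lambda> dividing n/m, minus \<phi>(m).\<close>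

definition dvd_comparable :: "nat \<Rightarrow> nat \<Rightarrow> bool" where
  "dvd_comparable a b \<longleftrightarrow> a \<noteq> b \<and> (a dvd b \<or> b dvd a)"

lemma od_adj_iff_dvd_comparable:
  "od_adj G x y \<longleftrightarrow> dvd_comparable (group.ord G x) (group.ord G y)"
  by (auto simp: od_adj_def dvd_comparable_def)

lemma group_dihedral:
  assumes "0 < n" shows "group (dihedral n)"
proof (rule groupI)
  fix x y assume "x \<in> carrier (dihedral n)" "y \<in> carrier (dihedral n)"
  then show "x \<otimes>\<^bsub>dihedral n\<^esub> y \<in> carrier (dihedral n)"
    using assms by (auto simp: dihedral_def dih_mult_def)
next
  show "\<one>\<^bsub>dihedral n\<^esub> \<in> carrier (dihedral n)"
    using assms by (auto simp: dihedral_def)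
next
  fix x y z
  assume "x \<in> carrier (dihedral n)" "y \<in> carrier (dihedral n)" "z \<in> carrier (dihedral n)"
  then show "x \<otimes>\<^bsub>dihedral n\<^esub> y \<otimes>\<^bsub>dihedral n\<^esub> z
      = x \<otimes>\<^bsub>dihedral n\<^esub> (y \<otimes>\<^bsub>dihedral n\<^esub> z)"
    by (cases x; cases y; cases z) (auto simp: dihedral_def dih_mult_def mod_simps algebra_simps)
next
  fix x assume "x \<in> carrier (dihedral n)"
  then show "\<one>\<^bsub>dihedral n\<^esub> \<otimes>\<^bsub>dihedral n\<^esub> x = x"
    by (cases x) (auto simp: dihedral_def dih_mult_def)
next
  fix x assume x: "x \<in> carrier (dihedral n)"
  obtain i s where xi: "x = (i, s)" by (cases x)
  show "\<exists>y\<in>carrier (dihedral n). y \<otimes>\<^bsub>dihedral n\<^esub> x = \<one>\<^bsub>dihedral n\<^esub>"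
  proof (cases s)
    case True
    then show ?thesis
      using x xi by (intro bexI[of _ x]) (auto simp: dihedral_def dih_mult_def)
  next
    case False
    then show ?thesis
      using x xi assms
      by (intro bexI[of _ "((- i) mod int n, False)"]) (auto simp: dihedral_def dih_mult_def mod_simps)
  qed
qed

lemma dihedral_rotation_pow:
  "(i, False) [^]\<^bsub>dihedral n\<^esub> (k::nat) = ((int k * i) mod int n, False)"
  by (induction k) (auto simp: dihedral_def dih_mult_def mod_simps algebra_simps)

lemma ord_dihedral_rotation:
  assumes "0 < n" and "0 \<le> i" and "i < int n"
  shows "group.ord (dihedral n) (i, False) = n div gcd n (nat i)"
proof -
  interpret group "dihedral n" using group_dihedral[OF assms(1)] .
  define g where "g = (1 mod int n, False)" \<comment> \<open>the rotation a; for n = 1 it is the identity\<close>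
  have g: "g \<in> carrier (dihedral n)"
    using assms(1) by (simp add: g_def dihedral_def)
  have g_pow: "g [^]\<^bsub>dihedral n\<^esub> k = (int k mod int n, False)" for k :: nat
    by (simp add: g_def dihedral_rotation_pow mod_simps)
  have "ord g = n"
    unfolding ord_unique[OF g] g_pow by (auto simp: dihedral_def mod_eq_0_iff_dvd)
  moreover have "(i, False) = g [^]\<^bsub>dihedral n\<^esub> nat i"
    using assms by (simp add: g_pow)
  ultimately show ?thesis
    using ord_pow_gen[OF g, of "nat i"] assms(1) by simp
qed

lemma ord_dihedral_reflection:
  assumes "0 < n" and "(i, True) \<in> carrier (dihedral n)"
  shows "group.ord (dihedral n) (i, True) = 2"
proof -
  interpret group "dihedral n" using group_dihedral[OF assms(1)] .
  have "(i, True) [^]\<^bsub>dihedral n\<^esub> (2::nat) = \<one>\<^bsub>dihedral n\<^esub>"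
    using assms(2) by (simp add: numeral_2_eq_2 dihedral_def dih_mult_def)
  then have "ord (i, True) dvd 2"
    using pow_eq_id[OF assms(2)] by simp
  moreover have "ord (i, True) \<noteq> 1"
    using ord_eq_1[OF assms(2)] by (simp add: dihedral_def)
  ultimately show ?thesis
    using two_is_prime_nat prime_nat_iff by blast
qed

lemma card_div_gcd_eq_totient:
  fixes n d :: nat
  assumes "0 < n" and "d dvd n"
  shows "card {k\<in>{0..<n}. n div gcd n k = d} = totient d"
proof -
  have "d \<noteq> 0" using assms by auto
  have quotient: "n div d dvd n" "n div d \<noteq> 0"
    using assms \<open>d \<noteq> 0\<close> by (simp_all add: div_dvd_iff_mult dvd_div_eq_0_iff)
  have "n div g = d \<longleftrightarrow> g = n div d" if "g dvd n" for g
    using that assms \<open>d \<noteq> 0\<close> by (auto simp: dvd_div_eq_mult mult.commute)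
  then have "{k\<in>{0..<n}. n div gcd n k = d} = {k\<in>{0..<n}. gcd k n = n div d}"
    by (auto simp: gcd.commute)
  also have "card \<dots> = card {k\<in>{0<..n}. gcd k n = n div d}"
    by (rule bij_betw_same_card[where f = "\<lambda>k. if k = 0 then n else k"])
       (use assms(1) in \<open>auto simp: bij_betw_def inj_on_def image_iff\<close>)
  also have "\<dots> = totient (n div (n div d))"
    by (rule card_gcd_eq_totient[OF assms(1) quotient(1)])
  also have "n div (n div d) = d"
    using quotient assms by (simp add: dvd_div_eq_mult)
  finally show ?thesis .
qed

lemma card_filter_div_gcd:
  fixes n :: nat
  assumes "0 < n"
  shows "card {k\<in>{0..<n}. P (n div gcd n k)} = (\<Sum>d | d dvd n \<and> P d. totient d)"
proof -
  let ?A = "\<lambda>d. {k\<in>{0..<n}. n div gcd n k = d}"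
  have fin: "finite {d. d dvd n \<and> P d}"
    using assms by (auto intro: finite_subset[of _ "{..n}"] dest: dvd_imp_le)
  have "n div gcd n k dvd n" for k
    using assms by (simp add: div_dvd_iff_mult)
  then have "{k\<in>{0..<n}. P (n div gcd n k)} = (\<Union>d\<in>{d. d dvd n \<and> P d}. ?A d)"
    by auto
  also have "card \<dots> = (\<Sum>d | d dvd n \<and> P d. card (?A d))"
    using fin by (intro card_UN_disjoint) auto
  also have "\<dots> = (\<Sum>d | d dvd n \<and> P d. totient d)"
    using assms by (intro sum.cong refl card_div_gcd_eq_totient) auto
  finally show ?thesis .
qed

lemma sum_divisors_multiples:
  fixes m n :: nat
  assumes "0 < m" and "m dvd n"
  shows "(\<Sum>d | d dvd n \<and> m dvd d. f d) = (\<Sum>l | l dvd n div m. f (l * m))"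
  using assms
  by (intro sum.reindex_bij_witness[of _ "\<lambda>l. l * m" "\<lambda>d. d div m"]) (auto simp: dvd_div_iff_mult)

lemma totient_sum_dvd_comparable:
  fixes m n :: nat
  assumes "0 < n" and "0 < m" and "m dvd n"
  shows "(\<Sum>d | d dvd n \<and> dvd_comparable m d. totient d) + 2 * totient m
       = m + (\<Sum>l | l dvd n div m. totient (l * m))"
proof -
  let ?Div = "{d. d dvd m}" and ?Mul = "{d. d dvd n \<and> m dvd d}"
  have fin: "finite ?Div" "finite ?Mul"
    using assms by (auto intro: finite_subset[of _ "{..m}"] finite_subset[of _ "{..n}"] dest: dvd_imp_le)
  have "{d. d dvd n \<and> dvd_comparable m d} = (?Div - {m}) \<union> (?Mul - {m})"
    using assms by (auto simp: dvd_comparable_def intro: dvd_trans)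
  moreover have "(?Div - {m}) \<inter> (?Mul - {m}) = {}"
    by (auto dest: dvd_antisym)
  ultimately have "(\<Sum>d | d dvd n \<and> dvd_comparable m d. totient d)
      = (\<Sum>d\<in>?Div - {m}. totient d) + (\<Sum>d\<in>?Mul - {m}. totient d)"
    using fin by (simp add: sum.union_disjoint)
  moreover have "(\<Sum>d\<in>?Div - {m}. totient d) + totient m = m"
    using sum.remove[OF fin(1), of m totient] totient_divisor_sum[of m] by simp
  moreover have "(\<Sum>d\<in>?Mul - {m}. totient d) + totient m = (\<Sum>l | l dvd n div m. totient (l * m))"
    using sum.remove[OF fin(2), of m totient] sum_divisors_multiples[OF assms(2,3), of totient] assms by simp
  ultimately show ?thesis by linarith
qed

lemma od_degree_dihedral:
  assumes "0 < n" and "x \<in> carrier (dihedral n)"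
  defines "m \<equiv> group.ord (dihedral n) x"
  shows "od_degree (dihedral n) x
       = (\<Sum>d | d dvd n \<and> dvd_comparable m d. totient d) + (if dvd_comparable m 2 then n else 0)"
proof -
  let ?Rot = "(\<lambda>k. (int k, False)) ` {k\<in>{0..<n}. dvd_comparable m (n div gcd n k)}"
  let ?Ref = "if dvd_comparable m 2 then {0..<int n} \<times> {True} else {}"
  have "{y \<in> carrier (dihedral n). od_adj (dihedral n) x y} = ?Rot \<union> ?Ref"
  proof (intro equalityI subsetI)
    fix y assume y: "y \<in> {y \<in> carrier (dihedral n). od_adj (dihedral n) x y}"
    obtain i s where yi: "y = (i, s)" by (cases y)
    have i: "0 \<le> i" "i < int n" using y yi by (auto simp: dihedral_def)
    show "y \<in> ?Rot \<union> ?Ref"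
    proof (cases s)
      case True
      then show ?thesis
        using y yi i ord_dihedral_reflection[OF assms(1)] by (auto simp: od_adj_iff_dvd_comparable m_def)
    next
      case False
      then have "nat i \<in> {k\<in>{0..<n}. dvd_comparable m (n div gcd n k)}"
        using y yi i ord_dihedral_rotation[OF assms(1)] by (auto simp: od_adj_iff_dvd_comparable m_def)
      then show ?thesis
        using yi i False by (auto intro: image_eqI[of _ _ "nat i"])
    qed
  next
    fix y assume "y \<in> ?Rot \<union> ?Ref"
    then show "y \<in> {y \<in> carrier (dihedral n). od_adj (dihedral n) x y}"
      using ord_dihedral_rotation[OF assms(1)] ord_dihedral_reflection[OF assms(1)]
      by (auto simp: od_adj_iff_dvd_comparable m_def dihedral_def split: if_splits)
  qed
  moreover have "card ?Rot = (\<Sum>d | d dvd n \<and> dvd_comparable m d. totient d)"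
    using card_filter_div_gcd[OF assms(1)] by (simp add: card_image inj_on_def)
  moreover have "card ?Ref = (if dvd_comparable m 2 then n else 0)"
    by (simp add: card_cartesian_product)
  moreover have "finite ?Rot" "finite ?Ref" "?Rot \<inter> ?Ref = {}"
    by auto
  ultimately show ?thesis
    unfolding od_degree_def by (simp add: card_Un_disjoint)
qed

lemma ord_dvd_dihedral_order:
  assumes "0 < n" and "even n" and "x \<in> carrier (dihedral n)"
  shows "group.ord (dihedral n) x dvd n"
proof (cases x)
  case (Pair i s)
  then have i: "0 \<le> i" "i < int n" using assms(3) by (auto simp: dihedral_def)
  show ?thesis
  proof (cases s)
    case True
    then show ?thesis using Pair assms ord_dihedral_reflection by simp
  next
    case False
    then show ?thesis using Pair assms(1) i by (simp add: ord_dihedral_rotation div_dvd_iff_mult)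
  qed
qed

theorem mainTheorem18:
  fixes n :: nat and x :: "int \<times> bool"
  assumes "n \<ge> 3" and "even n" and "x \<in> carrier (dihedral n)"
  defines "m \<equiv> group.ord (dihedral n) x"
  shows "(odd m \<and> m > 1 \<longrightarrow> int (od_degree (dihedral n) x) =
            int m - 2 * int (totient m) + (\<Sum>l\<in>{d. d dvd n div m}. int (totient (l * m))))
       \<and> (m = 2 \<longrightarrow> int (od_degree (dihedral n) x) =
            (\<Sum>l\<in>{d. d dvd n div 2}. int (totient (2 * l))))
       \<and> (even m \<and> m > 2 \<longrightarrow> int (od_degree (dihedral n) x) =
            int n + int m - 2 * int (totient m) + (\<Sum>l\<in>{d. d dvd n div m}. int (totient (l * m))))
       \<and> (m = 1 \<longrightarrow> int (od_degree (dihedral n) x) = 2 * int n - 1)"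
proof -
  have n: "0 < n" using assms(1) by simp
  have "m dvd n" using ord_dvd_dihedral_order[OF n assms(2,3)] by (simp add: m_def)
  then have "0 < m" using n by (auto intro: Nat.gr0I)
  have deg_nat: "od_degree (dihedral n) x + 2 * totient m
      = m + (\<Sum>l | l dvd n div m. totient (l * m)) + (if dvd_comparable m 2 then n else 0)"
    using od_degree_dihedral[OF n assms(3)] totient_sum_dvd_comparable[OF n \<open>0 < m\<close> \<open>m dvd n\<close>]
    by (simp add: m_def)
  then have deg: "int (od_degree (dihedral n) x) = int m - 2 * int (totient m)
      + (\<Sum>l | l dvd n div m. int (totient (l * m))) + (if dvd_comparable m 2 then int n else 0)"
    using arg_cong[OF deg_nat, of int] by (simp add: algebra_simps)
  have comparable_2: "dvd_comparable m 2 \<longleftrightarrow> m = 1 \<or> (even m \<and> m > 2)"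
    using \<open>0 < m\<close> dvd_imp_le[of m 2] by (auto simp: dvd_comparable_def)
  have gauss: "(\<Sum>l | l dvd n. int (totient l)) = int n"
    using totient_divisor_sum[of n] by (simp flip: of_nat_sum)
  show ?thesis
  proof (intro conjI impI)
    assume "odd m \<and> m > 1"
    then show "int (od_degree (dihedral n) x) =
        int m - 2 * int (totient m) + (\<Sum>l\<in>{d. d dvd n div m}. int (totient (l * m)))"
      using deg comparable_2 by simp
  next
    assume "m = 2"
    then show "int (od_degree (dihedral n) x) = (\<Sum>l\<in>{d. d dvd n div 2}. int (totient (2 * l)))"
      using deg comparable_2 by (simp add: mult.commute)
  next
    assume "even m \<and> m > 2"
    then show "int (od_degree (dihedral n) x) =
        int n + int m - 2 * int (totient m) + (\<Sum>l\<in>{d. d dvd n div m}. int (totient (l * m)))"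
      using deg comparable_2 by simp
  next
    assume "m = 1"
    then show "int (od_degree (dihedral n) x) = 2 * int n - 1"
      using deg comparable_2 gauss by simp
  qed
qed

end
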